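(* Let $J\subseteq E$ and let $F\subseteq E\setminus J$ be obtained by picking, for every $b\in B$, a set of $r^J_b$ edges of $E\setminus J$ incident to $b$ of minimal cost at $b$ (i.e. the $r^J_b$ edges $e$ with smallest $c_e^b$). Then $J\cup F$ is an $r$-edge-cover, and: (i) $\ell_F(B)\le\mathsf{opt}$; (ii) $\ell_F(A)\le\theta\cdot\Phi(J)$.
   Context: Bipartite Activation Edge-Multicover: the input is a bipartite multigraph $G=(A\cup B,E)$, where each edge is written $e=ab$ with $a\in A$, $b\in B$ and has non-negative activation costs $c_e^a,c_e^b$, and non-negative integer requirements $r=\{r_b: b\in B\}$. For $J\subseteq E$ and a node $v$, $\delta_J(v)$ is the set of edges of $J$ incident to $v$, $\deg_J(v)=|\delta_J(v)|$, $\ell_J(v)=\max\{c_e^v: e\in\delta_J(v)\}$ (max over the empty set is $0$), and $\ell_J(U)=\sum_{v\in U}\ell_J(v)$. $J$ is an $r$-edge-cover if $\deg_J(b)\ge r_b$ for all $b\in B$. $\mathsf{opt}$ is the minimum of $\ell_J(A\cup B)$ over $r$-edge-covers $J$ (the instance is assumed feasible). The slope is $\theta=\max_{e=ab\in E}\frac{\max\{c_e^a,c_e^b\}}{\min\{c_e^a,c_e^b\}}$. For $b\in B$, $w_b$ is the $r_b$-th smallest of the values $c_e^b$ over edges $e\in E$ incident to $b$ (with multiplicity), $w_b=0$ if $r_b=0$. Residual requirement $r^J_b=\max\{r_b-\deg_J(b),0\}$, potential $\Phi(J)=\sum_{b\in B}w_b r^J_b$. *)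

theory Defs
  imports Complex_Main "HOL-Library.Multiset"
begin

(* Bipartite multigraph: vertices of type 'v, parts A and B (disjoint),
   edges of type 'e in the finite set E; edge e has A-endpoint ea e and
   B-endpoint eb e.  The activation cost of e at its endpoint v is c e v. *)

definition delta :: "('e \<Rightarrow> 'v) \<Rightarrow> ('e \<Rightarrow> 'v) \<Rightarrow> 'e set \<Rightarrow> 'v \<Rightarrow> 'e set" where
  "delta ea eb J v = {e \<in> J. ea e = v \<or> eb e = v}"

definition deg :: "('e \<Rightarrow> 'v) \<Rightarrow> ('e \<Rightarrow> 'v) \<Rightarrow> 'e set \<Rightarrow> 'v \<Rightarrow> nat" where
  "deg ea eb J v = card (delta ea eb J v)"

definition load :: "('e \<Rightarrow> 'v) \<Rightarrow> ('e \<Rightarrow> 'v) \<Rightarrow> ('e \<Rightarrow> 'v \<Rightarrow> real) \<Rightarrow> 'e set \<Rightarrow> 'v \<Rightarrow> real" where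
  "load ea eb c J v = (if delta ea eb J v = {} then 0 else Max ((\<lambda>e. c e v) ` delta ea eb J v))"

definition load_set :: "('e \<Rightarrow> 'v) \<Rightarrow> ('e \<Rightarrow> 'v) \<Rightarrow> ('e \<Rightarrow> 'v \<Rightarrow> real) \<Rightarrow> 'e set \<Rightarrow> 'v set \<Rightarrow> real" where
  "load_set ea eb c J U = (\<Sum>v\<in>U. load ea eb c J v)"

definition is_cover :: "('e \<Rightarrow> 'v) \<Rightarrow> ('e \<Rightarrow> 'v) \<Rightarrow> 'v set \<Rightarrow> ('v \<Rightarrow> nat) \<Rightarrow> 'e set \<Rightarrow> bool" where
  "is_cover ea eb B r J = (\<forall>b\<in>B. deg ea eb J b \<ge> r b)"

definition opt :: "('e \<Rightarrow> 'v) \<Rightarrow> ('e \<Rightarrow> 'v) \<Rightarrow> ('e \<Rightarrow> 'v \<Rightarrow> real) \<Rightarrow> 'v set \<Rightarrow> 'v set \<Rightarrow> 'e set \<Rightarrow> ('v \<Rightarrow> nat) \<Rightarrow> real" where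
  "opt ea eb c A B E r = Min {load_set ea eb c J (A \<union> B) | J. J \<subseteq> E \<and> is_cover ea eb B r J}"

definition slope :: "('e \<Rightarrow> 'v) \<Rightarrow> ('e \<Rightarrow> 'v) \<Rightarrow> ('e \<Rightarrow> 'v \<Rightarrow> real) \<Rightarrow> 'e set \<Rightarrow> real" where
  "slope ea eb c E = Max ((\<lambda>e. max (c e (ea e)) (c e (eb e)) / min (c e (ea e)) (c e (eb e))) ` E)"

definition wreq :: "('e \<Rightarrow> 'v) \<Rightarrow> ('e \<Rightarrow> 'v) \<Rightarrow> ('e \<Rightarrow> 'v \<Rightarrow> real) \<Rightarrow> 'e set \<Rightarrow> ('v \<Rightarrow> nat) \<Rightarrow> 'v \<Rightarrow> real" where
  "wreq ea eb c E r b = (if r b = 0 then 0 else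
     sorted_list_of_multiset (image_mset (\<lambda>e. c e b) (mset_set (delta ea eb E b))) ! (r b - 1))"

(* residual requirement max(r_b - deg_J(b), 0), via truncated nat subtraction *)
definition resid :: "('e \<Rightarrow> 'v) \<Rightarrow> ('e \<Rightarrow> 'v) \<Rightarrow> ('v \<Rightarrow> nat) \<Rightarrow> 'e set \<Rightarrow> 'v \<Rightarrow> nat" where
  "resid ea eb r J b = r b - deg ea eb J b"

definition potential :: "('e \<Rightarrow> 'v) \<Rightarrow> ('e \<Rightarrow> 'v) \<Rightarrow> ('e \<Rightarrow> 'v \<Rightarrow> real) \<Rightarrow> 'e set \<Rightarrow> 'v set \<Rightarrow> ('v \<Rightarrow> nat) \<Rightarrow> 'e set \<Rightarrow> real" where
  "potential ea eb c E B r J = (\<Sum>b\<in>B. wreq ea eb c E r b * real (resid ea eb r J b))"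

end

theory Submission
  imports Defs
begin

text \<open>
  Let \<open>w\<^sub>b\<close> be the \<open>r\<^sub>b\<close>-th smallest cost at \<open>b\<close>. Any \<open>r\<close>-edge-cover uses at least
  \<open>r\<^sub>b\<close> edges at \<open>b\<close>, so its most expensive one there costs at least \<open>w\<^sub>b\<close>. Conversely,
  the greedy edges at \<open>b\<close> together with the edges of \<open>J\<close> at \<open>b\<close> are \<open>r\<^sub>b\<close> edges, so if a
  greedy edge cost more than \<open>w\<^sub>b\<close>, fewer than \<open>r\<^sub>b\<close> edges at \<open>b\<close> would cost at most
  \<open>w\<^sub>b\<close>. Hence every greedy edge costs at most \<open>w\<^sub>b\<close> at \<open>b\<close>, which gives (i) after
  summing over \<open>B\<close>. For (ii), the load at \<open>a \<in> A\<close> is at most the sum of the \<open>A\<close>-costs of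
  its greedy edges, each at most \<open>\<theta>\<close> times the \<open>B\<close>-cost, and \<open>b\<close> has \<open>r\<^sup>J\<^sub>b\<close> greedy edges.
\<close>

text \<open>Counting from 1, matching \<open>wreq\<close>; for \<open>k = 0\<close> it is the smallest value.\<close>

definition kth_smallest :: "('a \<Rightarrow> 'b::linorder) \<Rightarrow> 'a set \<Rightarrow> nat \<Rightarrow> 'b" where
  "kth_smallest f S k = sorted_list_of_multiset (image_mset f (mset_set S)) ! (k - 1)"

lemma length_filter_le_sorted_nth:
  fixes xs :: "'a::linorder list"
  assumes "sorted xs" "0 < k" "k \<le> length xs"
  shows "k \<le> length (filter (\<lambda>v. v \<le> xs ! (k - 1)) xs)"
proof -
  have "xs ! i \<le> xs ! (k - 1)" if "i < k" for i
    using assms that by (intro sorted_nth_mono) auto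
  then have "\<forall>v\<in>set (take k xs). v \<le> xs ! (k - 1)"
    by (auto simp: in_set_conv_nth)
  then have "filter (\<lambda>v. v \<le> xs ! (k - 1)) (take k xs) = take k xs"
    by simp
  then have "length (filter (\<lambda>v. v \<le> xs ! (k - 1)) (take k xs)) = k"
    using assms(3) by simp
  moreover have "length (filter (\<lambda>v. v \<le> xs ! (k - 1)) (take k xs))
      \<le> length (filter (\<lambda>v. v \<le> xs ! (k - 1)) xs)"
    by (metis append_take_drop_id filter_append le_add1 length_append)
  ultimately show ?thesis by simp
qed

lemma length_filter_less_sorted_nth:
  fixes xs :: "'a::linorder list"
  assumes "sorted xs" "0 < k" "k \<le> length xs"
  shows "length (filter (\<lambda>v. v < xs ! (k - 1)) xs) < k"
proof -
  have "\<forall>v\<in>set (drop (k - 1) xs). \<not> v < xs ! (k - 1)"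
    using assms by (auto simp: in_set_conv_nth not_less intro!: sorted_nth_mono)
  then have "filter (\<lambda>v. v < xs ! (k - 1)) (drop (k - 1) xs) = []"
    by (simp add: filter_empty_conv)
  then have "filter (\<lambda>v. v < xs ! (k - 1)) xs = filter (\<lambda>v. v < xs ! (k - 1)) (take (k - 1) xs)"
    by (metis append_Nil2 append_take_drop_id filter_append)
  also have "length \<dots> \<le> k - 1"
    using length_filter_le[of _ "take (k - 1) xs"] by simp
  finally show ?thesis using assms(2) by linarith
qed

lemma length_filter_sorted_list_of_multiset:
  assumes "finite S"
  shows "length (filter P (sorted_list_of_multiset (image_mset f (mset_set S))))
    = card {x\<in>S. P (f x)}"
proof -
  have "length (filter P (sorted_list_of_multiset (image_mset f (mset_set S))))
      = size (filter_mset P (image_mset f (mset_set S)))"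
    by (metis mset_filter mset_sorted_list_of_multiset size_mset)
  also have "\<dots> = card {x\<in>S. P (f x)}"
    by (simp add: filter_mset_image_mset filter_mset_mset_set assms)
  finally show ?thesis .
qed

lemma card_le_kth_smallest:
  assumes "finite S" "0 < k" "k \<le> card S"
  shows "k \<le> card {x\<in>S. f x \<le> kth_smallest f S k}"
  using length_filter_le_sorted_nth[of "sorted_list_of_multiset (image_mset f (mset_set S))" k]
    length_filter_sorted_list_of_multiset[OF assms(1), of _ f] assms
    length_filter_sorted_list_of_multiset[OF assms(1), of "\<lambda>_. True" f]
  by (simp add: kth_smallest_def)

lemma card_less_kth_smallest:
  assumes "finite S" "0 < k" "k \<le> card S"
  shows "card {x\<in>S. f x < kth_smallest f S k} < k"
  using length_filter_less_sorted_nth[of "sorted_list_of_multiset (image_mset f (mset_set S))" k]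
    length_filter_sorted_list_of_multiset[OF assms(1), of _ f] assms
    length_filter_sorted_list_of_multiset[OF assms(1), of "\<lambda>_. True" f]
  by (simp add: kth_smallest_def)

lemma kth_smallest_le_Max:
  assumes "finite S" "T \<subseteq> S" "0 < k" "k \<le> card T"
  shows "kth_smallest f S k \<le> Max (f ` T)"
proof (rule ccontr)
  assume "\<not> kth_smallest f S k \<le> Max (f ` T)"
  then have "f t < kth_smallest f S k" if "t \<in> T" for t
    using that Max_ge[OF finite_imageI[OF finite_subset[OF assms(2,1)]], of "f t" f]
    by (auto intro: le_less_trans)
  then have "T \<subseteq> {x\<in>S. f x < kth_smallest f S k}"
    using assms(2) by blast
  then have "card T \<le> card {x\<in>S. f x < kth_smallest f S k}"
    by (simp add: card_mono assms(1))
  moreover have "k \<le> card S"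
    using assms(4) card_mono[OF assms(1,2)] by linarith
  ultimately show False
    using card_less_kth_smallest[of S k f] assms(1,3,4) by linarith
qed

lemma greedy_choice_le_kth_smallest:
  assumes "finite S" "D \<subseteq> S" "F \<subseteq> S - D" "card F = k - card D" "k \<le> card S"
    and greedy: "\<forall>x\<in>F. \<forall>y\<in>S - D - F. f x \<le> f y"
    and "x \<in> F"
  shows "f x \<le> kth_smallest f S k"
proof (rule ccontr)
  assume above: "\<not> f x \<le> kth_smallest f S k"
  have finF: "finite F" and finD: "finite D"
    using assms finite_subset by blast+
  have "0 < k" and k: "card D + (card F - 1) < k"
    using assms(4,7) finF card_gt_0_iff by fastforce+
  have "{y\<in>S. f y \<le> kth_smallest f S k} \<subseteq> D \<union> (F - {x})"
  proof
    fix y assume y: "y \<in> {y\<in>S. f y \<le> kth_smallest f S k}"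
    then have "y \<noteq> x" using above by auto
    moreover have "y \<in> D \<or> y \<in> F"
    proof (rule ccontr)
      assume "\<not> (y \<in> D \<or> y \<in> F)"
      then have "f x \<le> f y" using y greedy assms(7) by blast
      then show False using y above order_trans by blast
    qed
    ultimately show "y \<in> D \<union> (F - {x})" by blast
  qed
  then have "card {y\<in>S. f y \<le> kth_smallest f S k} \<le> card (D \<union> (F - {x}))"
    using finD finF by (intro card_mono) auto
  also have "\<dots> \<le> card D + card (F - {x})"
    by (rule card_Un_le)
  finally have "card {y\<in>S. f y \<le> kth_smallest f S k} \<le> card D + (card F - 1)"
    using assms(7) finF by simp
  then show False
    using card_le_kth_smallest[OF assms(1) \<open>0 < k\<close> assms(5), of f] k by linarith
qed

lemma finite_delta: "finite K \<Longrightarrow> finite (delta ea eb K v)"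
  by (simp add: delta_def)

lemma delta_mono: "K \<subseteq> K' \<Longrightarrow> delta ea eb K v \<subseteq> delta ea eb K' v"
  by (auto simp: delta_def)

lemma delta_Diff: "delta ea eb (K - J) v = delta ea eb K v - delta ea eb J v"
  by (auto simp: delta_def)

lemma load_le_sum:
  assumes "finite K" "\<forall>e\<in>delta ea eb K v. 0 \<le> c e v"
  shows "load ea eb c K v \<le> (\<Sum>e\<in>delta ea eb K v. c e v)"
proof (cases "delta ea eb K v = {}")
  case False
  have "c e v \<le> (\<Sum>e\<in>delta ea eb K v. c e v)" if "e \<in> delta ea eb K v" for e
    using that assms by (intro member_le_sum) (auto simp: finite_delta)
  then show ?thesis
    using False assms(1) by (simp add: load_def finite_delta)
qed (simp add: load_def)

lemma wreq_eq_kth_smallest: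
  "r b \<noteq> 0 \<Longrightarrow> wreq ea eb c E r b = kth_smallest (\<lambda>e. c e b) (delta ea eb E b) (r b)"
  by (simp add: wreq_def kth_smallest_def)

lemma opt_attained:
  assumes "finite E" "\<exists>K. K \<subseteq> E \<and> is_cover ea eb B r K"
  obtains K where "K \<subseteq> E" "is_cover ea eb B r K" "opt ea eb c A B E r = load_set ea eb c K (A \<union> B)"
proof -
  let ?covers = "{K. K \<subseteq> E \<and> is_cover ea eb B r K}"
  let ?loads = "(\<lambda>K. load_set ea eb c K (A \<union> B)) ` ?covers"
  have "opt ea eb c A B E r = Min ?loads"
    unfolding opt_def by (rule arg_cong[where f = Min]) auto
  moreover have "finite ?covers"
    using assms(1) by (simp add: finite_subset[of _ "Pow E"] subset_eq)
  then have "Min ?loads \<in> ?loads"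
    using assms(2) by (intro Min_in) auto
  ultimately show ?thesis
    using that by auto
qed

locale bipartite_activation =
  fixes A B :: "'v set" and E :: "'e set" and ea eb :: "'e \<Rightarrow> 'v" and c :: "'e \<Rightarrow> 'v \<Rightarrow> real"
  assumes finite_A: "finite A" and finite_B: "finite B" and disjoint_parts: "A \<inter> B = {}"
    and finite_E: "finite E"
    and ea_in_A: "e \<in> E \<Longrightarrow> ea e \<in> A" and eb_in_B: "e \<in> E \<Longrightarrow> eb e \<in> B"
    and cost_ea_nonneg: "e \<in> E \<Longrightarrow> 0 \<le> c e (ea e)"
    and cost_eb_nonneg: "e \<in> E \<Longrightarrow> 0 \<le> c e (eb e)"
begin

lemma delta_B: "K \<subseteq> E \<Longrightarrow> b \<in> B \<Longrightarrow> delta ea eb K b = {e\<in>K. eb e = b}"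
  using ea_in_A disjoint_parts by (auto simp: delta_def)

lemma delta_A: "K \<subseteq> E \<Longrightarrow> a \<in> A \<Longrightarrow> delta ea eb K a = {e\<in>K. ea e = a}"
  using eb_in_B disjoint_parts by (auto simp: delta_def)

lemma cost_nonneg: "K \<subseteq> E \<Longrightarrow> e \<in> delta ea eb K v \<Longrightarrow> 0 \<le> c e v"
  using cost_ea_nonneg cost_eb_nonneg by (auto simp: delta_def)

lemma load_nonneg:
  assumes "K \<subseteq> E"
  shows "0 \<le> load ea eb c K v"
proof (cases "delta ea eb K v = {}")
  case False
  then obtain e where e: "e \<in> delta ea eb K v" by blast
  have "c e v \<le> Max ((\<lambda>e. c e v) ` delta ea eb K v)"
    using e finite_subset[OF assms finite_E] by (simp add: finite_delta)
  then show ?thesis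
    using False cost_nonneg[OF assms e] by (simp add: load_def)
qed (simp add: load_def)

lemma load_set_A_le_sum:
  assumes "K \<subseteq> E"
  shows "load_set ea eb c K A \<le> (\<Sum>e\<in>K. c e (ea e))"
proof -
  have finK: "finite K" using assms finite_E finite_subset by blast
  have "load ea eb c K a \<le> (\<Sum>e\<in>{e\<in>K. ea e = a}. c e (ea e))" if "a \<in> A" for a
  proof -
    have "load ea eb c K a \<le> (\<Sum>e\<in>{e\<in>K. ea e = a}. c e a)"
      using load_le_sum[OF finK, of ea eb a c] cost_nonneg[OF assms] delta_A[OF assms that]
      by simp
    then show ?thesis by simp
  qed
  then have "load_set ea eb c K A \<le> (\<Sum>a\<in>A. \<Sum>e\<in>{e\<in>K. ea e = a}. c e (ea e))"
    unfolding load_set_def by (rule sum_mono)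
  also have "\<dots> = (\<Sum>e\<in>K. c e (ea e))"
    using ea_in_A assms by (intro sum.group[OF finK finite_A]) auto
  finally show ?thesis .
qed

lemma cost_A_le_slope_cost_B:
  assumes e: "e \<in> E" and pos: "0 < min (c e (ea e)) (c e (eb e))"
  shows "c e (ea e) \<le> slope ea eb c E * c e (eb e)"
proof -
  define m where "m = min (c e (ea e)) (c e (eb e))"
  define ratio where "ratio = max (c e (ea e)) (c e (eb e)) / m"
  have m: "0 < m"
    using pos unfolding m_def .
  have "ratio \<le> slope ea eb c E"
    using e finite_E by (simp add: slope_def ratio_def m_def)
  moreover have "0 \<le> ratio"
    using m cost_ea_nonneg[OF e] unfolding ratio_def
    by (intro divide_nonneg_nonneg) (auto simp: le_max_iff_disj)
  ultimately have "ratio * m \<le> slope ea eb c E * c e (eb e)"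
    using m by (intro mult_mono) (auto simp: m_def)
  moreover have "ratio * m = max (c e (ea e)) (c e (eb e))"
    using m by (simp add: ratio_def)
  ultimately show ?thesis by linarith
qed

lemma wreq_le_load_cover:
  assumes "K \<subseteq> E" "is_cover ea eb B r K" "b \<in> B"
  shows "wreq ea eb c E r b \<le> load ea eb c K b"
proof (cases "r b = 0")
  case True
  then show ?thesis using load_nonneg[OF assms(1)] by (simp add: wreq_def)
next
  case False
  have cover: "r b \<le> card (delta ea eb K b)"
    using assms(2,3) by (simp add: is_cover_def deg_def)
  then have "delta ea eb K b \<noteq> {}" using False by auto
  moreover have "kth_smallest (\<lambda>e. c e b) (delta ea eb E b) (r b) \<le> Max ((\<lambda>e. c e b) ` delta ea eb K b)"
    using False cover finite_E delta_mono[OF assms(1), of ea eb b]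
    by (intro kth_smallest_le_Max) (auto simp: finite_delta)
  ultimately show ?thesis
    using False by (simp add: wreq_eq_kth_smallest load_def)
qed

end

locale greedy_augmentation = bipartite_activation A B E ea eb c
  for A B :: "'v set" and E :: "'e set" and ea eb :: "'e \<Rightarrow> 'v" and c :: "'e \<Rightarrow> 'v \<Rightarrow> real" +
  fixes r :: "'v \<Rightarrow> nat" and J :: "'e set" and Fsel :: "'v \<Rightarrow> 'e set"
  assumes feasible: "\<exists>K. K \<subseteq> E \<and> is_cover ea eb B r K"
    and J_subset: "J \<subseteq> E"
    and Fsel_subset: "b \<in> B \<Longrightarrow> Fsel b \<subseteq> delta ea eb (E - J) b"
    and card_Fsel: "b \<in> B \<Longrightarrow> card (Fsel b) = resid ea eb r J b"
    and Fsel_greedy: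
      "b \<in> B \<Longrightarrow> e \<in> Fsel b \<Longrightarrow> e' \<in> delta ea eb (E - J) b - Fsel b \<Longrightarrow> c e b \<le> c e' b"
begin

abbreviation selected :: "'e set" where
  "selected \<equiv> \<Union>b\<in>B. Fsel b"

lemma selected_subset: "selected \<subseteq> E - J"
  using Fsel_subset by (auto simp: delta_def)

lemma finite_Fsel: "b \<in> B \<Longrightarrow> finite (Fsel b)"
  using selected_subset finite_subset[OF _ finite_E, of "Fsel b"] by blast

lemma eb_Fsel: "b \<in> B \<Longrightarrow> e \<in> Fsel b \<Longrightarrow> eb e = b"
  using Fsel_subset delta_B[of "E - J" b] by blast

lemma delta_selected: "b \<in> B \<Longrightarrow> delta ea eb selected b = Fsel b"
proof -
  assume b: "b \<in> B"
  have "selected \<subseteq> E"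
    using selected_subset by blast
  then show ?thesis
    using delta_B[of selected b] b eb_Fsel by auto
qed

lemma requirement_le_card_delta: "b \<in> B \<Longrightarrow> r b \<le> card (delta ea eb E b)"
proof -
  assume b: "b \<in> B"
  obtain K where "K \<subseteq> E" "is_cover ea eb B r K"
    using feasible by blast
  then have "r b \<le> card (delta ea eb K b)"
    using b by (simp add: is_cover_def deg_def)
  also have "\<dots> \<le> card (delta ea eb E b)"
    using \<open>K \<subseteq> E\<close> finite_E by (intro card_mono finite_delta delta_mono)
  finally show ?thesis .
qed

lemma selected_cost_le_wreq:
  assumes b: "b \<in> B" and e: "e \<in> Fsel b"
  shows "c e b \<le> wreq ea eb c E r b"
proof -
  have "0 < card (Fsel b)"
    using e finite_Fsel[OF b] card_gt_0_iff by blast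
  then have "r b \<noteq> 0"
    using card_Fsel[OF b] by (simp add: resid_def)
  moreover have "c e b \<le> kth_smallest (\<lambda>e. c e b) (delta ea eb E b) (r b)"
  proof (rule greedy_choice_le_kth_smallest[where D = "delta ea eb J b" and F = "Fsel b"])
    show "finite (delta ea eb E b)" using finite_E by (rule finite_delta)
    show "delta ea eb J b \<subseteq> delta ea eb E b" using J_subset by (rule delta_mono)
    show "Fsel b \<subseteq> delta ea eb E b - delta ea eb J b" using Fsel_subset[OF b] by (simp add: delta_Diff)
    show "card (Fsel b) = r b - card (delta ea eb J b)" using card_Fsel[OF b] by (simp add: resid_def deg_def)
    show "r b \<le> card (delta ea eb E b)" using b by (rule requirement_le_card_delta)
    show "\<forall>x\<in>Fsel b. \<forall>y\<in>delta ea eb E b - delta ea eb J b - Fsel b. c x b \<le> c y b"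
      using Fsel_greedy[OF b] by (simp add: delta_Diff)
  qed (rule e)
  ultimately show ?thesis by (simp add: wreq_eq_kth_smallest)
qed

lemma is_cover_augmented: "is_cover ea eb B r (J \<union> selected)"
  unfolding is_cover_def
proof
  fix b assume b: "b \<in> B"
  have finite_JF: "finite (J \<union> selected)"
    using J_subset selected_subset finite_subset[OF _ finite_E] by blast
  have finite: "finite (delta ea eb J b)" "finite (Fsel b)"
    using finite_delta[OF finite_subset[OF J_subset finite_E]] finite_Fsel[OF b] by auto
  have disjoint: "delta ea eb J b \<inter> Fsel b = {}"
    using Fsel_subset[OF b] by (auto simp: delta_def)
  have "r b \<le> card (delta ea eb J b) + card (Fsel b)"
    using card_Fsel[OF b] by (simp add: resid_def deg_def)
  also have "\<dots> = card (delta ea eb J b \<union> Fsel b)"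
    using finite disjoint by (simp add: card_Un_disjoint)
  also have "\<dots> \<le> deg ea eb (J \<union> selected) b"
    unfolding deg_def
    using delta_selected[OF b] delta_mono[of _ "J \<union> selected" ea eb b]
    by (intro card_mono finite_delta finite_JF) blast
  finally show "r b \<le> deg ea eb (J \<union> selected) b" .
qed

lemma load_selected_le_load_cover:
  assumes K: "K \<subseteq> E" "is_cover ea eb B r K" and b: "b \<in> B"
  shows "load ea eb c selected b \<le> load ea eb c K b"
proof (cases "Fsel b = {}")
  case True
  then show ?thesis using delta_selected[OF b] load_nonneg[OF K(1)] by (simp add: load_def)
next
  case False
  have "Max ((\<lambda>e. c e b) ` Fsel b) \<le> wreq ea eb c E r b"
    using False finite_Fsel[OF b] selected_cost_le_wreq[OF b] by simp
  then show ?thesis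
    using False delta_selected[OF b] wreq_le_load_cover[OF K b] by (simp add: load_def)
qed

lemma load_selected_B_le_opt: "load_set ea eb c selected B \<le> opt ea eb c A B E r"
proof -
  obtain K where K: "K \<subseteq> E" "is_cover ea eb B r K"
    and opt: "opt ea eb c A B E r = load_set ea eb c K (A \<union> B)"
    using opt_attained[OF finite_E feasible] by blast
  have "load_set ea eb c selected B \<le> load_set ea eb c K B"
    unfolding load_set_def by (intro sum_mono load_selected_le_load_cover[OF K])
  also have "\<dots> \<le> load_set ea eb c K A + load_set ea eb c K B"
    unfolding load_set_def using load_nonneg[OF K(1)] by (simp add: sum_nonneg)
  also have "\<dots> = load_set ea eb c K (A \<union> B)"
    unfolding load_set_def using finite_A finite_B disjoint_parts by (simp add: sum.union_disjoint)
  finally show ?thesis using opt by simp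
qed

lemma sum_selected_costs_le_potential:
  "(\<Sum>e\<in>selected. c e (eb e)) \<le> potential ea eb c E B r J"
proof -
  have "(\<Sum>e\<in>selected. c e (eb e)) = (\<Sum>b\<in>B. \<Sum>e\<in>Fsel b. c e (eb e))"
    using finite_B finite_Fsel eb_Fsel by (intro sum.UNION_disjoint) blast+
  also have "\<dots> \<le> (\<Sum>b\<in>B. wreq ea eb c E r b * real (resid ea eb r J b))"
  proof (rule sum_mono)
    fix b assume b: "b \<in> B"
    have "(\<Sum>e\<in>Fsel b. c e (eb e)) \<le> (\<Sum>e\<in>Fsel b. wreq ea eb c E r b)"
      using selected_cost_le_wreq[OF b] Fsel_subset[OF b] delta_B[of "E - J" b] b
      by (intro sum_mono) auto
    then show "(\<Sum>e\<in>Fsel b. c e (eb e)) \<le> wreq ea eb c E r b * real (resid ea eb r J b)"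
      using card_Fsel[OF b] by (simp add: mult.commute)
  qed
  finally show ?thesis by (simp add: potential_def)
qed

lemma load_selected_A_le_slope_potential:
  assumes pos: "\<forall>e\<in>E. 0 < min (c e (ea e)) (c e (eb e))"
  shows "load_set ea eb c selected A \<le> slope ea eb c E * potential ea eb c E B r J"
proof (cases "E = {}")
  case True
  then have "r b = 0" if "b \<in> B" for b
    using requirement_le_card_delta[OF that] by (simp add: delta_def)
  then have "potential ea eb c E B r J = 0"
    by (simp add: potential_def wreq_def)
  moreover have "load_set ea eb c selected A = 0"
    using True selected_subset by (simp add: load_set_def load_def delta_def)
  ultimately show ?thesis by simp
next
  case False
  then obtain e where "e \<in> E" by blast
  moreover have "0 < c e (ea e)" "0 < c e (eb e)"
    using pos \<open>e \<in> E\<close> by auto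
  ultimately have slope_nonneg: "0 \<le> slope ea eb c E"
    using cost_A_le_slope_cost_B[of e] pos mult_neg_pos[of "slope ea eb c E" "c e (eb e)"]
    by (auto simp: not_le[symmetric])
  have "load_set ea eb c selected A \<le> (\<Sum>e\<in>selected. c e (ea e))"
    using selected_subset by (intro load_set_A_le_sum) auto
  also have "\<dots> \<le> (\<Sum>e\<in>selected. slope ea eb c E * c e (eb e))"
    using selected_subset pos by (intro sum_mono cost_A_le_slope_cost_B) auto
  also have "\<dots> = slope ea eb c E * (\<Sum>e\<in>selected. c e (eb e))"
    by (simp add: sum_distrib_left)
  also have "\<dots> \<le> slope ea eb c E * potential ea eb c E B r J"
    using sum_selected_costs_le_potential slope_nonneg by (rule mult_left_mono)
  finally show ?thesis .
qed

end

theorem mainTheorem6: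
  fixes A B :: "'v set" and E J :: "'e set" and ea eb :: "'e \<Rightarrow> 'v"
    and c :: "'e \<Rightarrow> 'v \<Rightarrow> real" and r :: "'v \<Rightarrow> nat" and Fsel :: "'v \<Rightarrow> 'e set"
  assumes finA: "finite A" and finB: "finite B" and disj: "A \<inter> B = {}"
    and finE: "finite E"
    and endA: "\<forall>e\<in>E. ea e \<in> A" and endB: "\<forall>e\<in>E. eb e \<in> B"
    and cost_nonneg: "\<forall>e\<in>E. c e (ea e) \<ge> 0 \<and> c e (eb e) \<ge> 0"
    and feasible: "\<exists>K. K \<subseteq> E \<and> is_cover ea eb B r K"
    and JE: "J \<subseteq> E"
    and Fsel_sub: "\<forall>b\<in>B. Fsel b \<subseteq> delta ea eb (E - J) b"
    and Fsel_card: "\<forall>b\<in>B. card (Fsel b) = resid ea eb r J b"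
    and Fsel_min: "\<forall>b\<in>B. \<forall>e\<in>Fsel b. \<forall>e'\<in>delta ea eb (E - J) b - Fsel b. c e b \<le> c e' b"
  shows "is_cover ea eb B r (J \<union> (\<Union>b\<in>B. Fsel b))
    \<and> load_set ea eb c (\<Union>b\<in>B. Fsel b) B \<le> opt ea eb c A B E r
    \<and> ((\<forall>e\<in>E. min (c e (ea e)) (c e (eb e)) > 0) \<longrightarrow>
         load_set ea eb c (\<Union>b\<in>B. Fsel b) A \<le> slope ea eb c E * potential ea eb c E B r J)"
proof -
  interpret greedy_augmentation A B E ea eb c r J Fsel
    using assms by unfold_locales blast+
  show ?thesis
    using is_cover_augmented load_selected_B_le_opt load_selected_A_le_slope_potential by blast
qed

end
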